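(* Let $n\ge2$ and $H>1$. There is a constant $c(n,H)$, depending only on $n$ and $H$, with the following property. For every $\mu>0$, let $\varphi$ be the profile function of the hyperbolic Delaunay unduloid $\mathcal{D}_H(\mu)$ and let $V$ be the potential of its stability operator. Then $V\tan^2\varphi\le c(n,H)$ everywhere on $\mathcal{D}_H(\mu)$.
   Context: Use the upper half-space model of $\mathbb{H}^{n+1}$. For $\mu>0$ and $H>1$, let $\varphi:\mathbb{R}\to(0,\pi/2)$ be a solution of $$\mu=\frac{(\tan\varphi)^{n-1}}{\cos\varphi\sqrt{1+\varphi'^2}}-H(\tan\varphi)^n.$$ The hyperbolic Delaunay unduloid $\mathcal{D}_H(\mu)$ is parametrized by $\Phi(t,\omega)=(e^t\sin\varphi(t)\omega,e^t\cos\varphi(t))$, $\omega\in S^{n-1}$. It has constant (normalized) mean curvature $H$. Its stability operator is $L=\Delta-V$, where $\Delta$ is the non-negative Laplacian and $V=\|B\|^2-n$. Here $\|B\|$ is the norm of the second fundamental form, and $V\circ\Phi = n(H^2-1)+n(n-1)\mu^2(\tan\varphi)^{-2n}$. *)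

theory Defs
  imports "HOL-Analysis.Analysis"
begin

definition delaunay_profile :: "nat \<Rightarrow> real \<Rightarrow> real \<Rightarrow> (real \<Rightarrow> real) \<Rightarrow> bool" where
  "delaunay_profile n H \<mu> \<phi> \<longleftrightarrow>
     (\<forall>t. 0 < \<phi> t \<and> \<phi> t < pi / 2) \<and>
     (\<forall>t. \<phi> differentiable (at t)) \<and>
     (\<forall>t. \<mu> = tan (\<phi> t) ^ (n - 1) / (cos (\<phi> t) * sqrt (1 + (deriv \<phi> t)\<^sup>2))
              - H * tan (\<phi> t) ^ n)"

text \<open>Potential V = |B|^2 - n of the stability operator, pulled back by Phi (depends only on t):
  V(Phi(t,omega)) = n(H^2-1) + n(n-1) mu^2 (tan phi(t))^(-2n).\<close>
definition stab_potential :: "nat \<Rightarrow> real \<Rightarrow> real \<Rightarrow> (real \<Rightarrow> real) \<Rightarrow> real \<Rightarrow> real" where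
  "stab_potential n H \<mu> \<phi> t =
     real n * (H\<^sup>2 - 1) + real n * (real n - 1) * \<mu>\<^sup>2 / tan (\<phi> t) ^ (2 * n)"

end

theory Submission
  imports Defs
begin

text \<open>Write \<open>x = tan \<phi>\<close> and \<open>a = \<mu> / x^(n-1)\<close>, so that \<open>V tan\<^sup>2\<phi> = n (H\<^sup>2 - 1) x\<^sup>2 + n (n - 1) a\<^sup>2\<close>.
  Dividing the first integral by \<open>x^(n-1)\<close> and using \<open>sqrt (1 + \<phi>'\<^sup>2) \<ge> 1\<close> gives
  \<open>a + H x \<le> sec \<phi>\<close>. As both summands are positive, each of \<open>H x\<close> and \<open>a\<close> is below
  \<open>sec \<phi>\<close>, whose square is \<open>1 + x\<^sup>2\<close>. The first comparison yields \<open>(H\<^sup>2 - 1) x\<^sup>2 < 1\<close>, and then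
  the second yields \<open>a\<^sup>2 < 1 + x\<^sup>2 < H\<^sup>2 / (H\<^sup>2 - 1)\<close>.\<close>

lemma first_integral_le_sec:
  fixes n :: nat and H \<mu> p s :: real
  assumes "n \<ge> 1" and "0 < p" and "p < pi / 2" and "s \<ge> 1"
    and first_integral: "\<mu> = tan p ^ (n - 1) / (cos p * s) - H * tan p ^ n"
  shows "\<mu> / tan p ^ (n - 1) + H * tan p \<le> 1 / cos p"
proof -
  have "cos p > 0" and "tan p > 0"
    using assms by (auto intro: cos_gt_zero_pi tan_gt_zero)
  have "tan p ^ n = tan p ^ (n - 1) * tan p"
    using power_minus_mult[of n "tan p"] \<open>n \<ge> 1\<close> by simp
  then have "\<mu> / tan p ^ (n - 1) + H * tan p = 1 / (cos p * s)"
    using \<open>tan p > 0\<close> by (simp add: first_integral diff_divide_distrib)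
  also have "\<dots> \<le> 1 / cos p"
    using \<open>cos p > 0\<close> \<open>s \<ge> 1\<close> by (simp add: frac_le)
  finally show ?thesis .
qed

lemma stab_potential_mult_tan_square:
  assumes "n \<ge> 1" and "tan (\<phi> t) \<noteq> 0"
  shows "stab_potential n H \<mu> \<phi> t * (tan (\<phi> t))\<^sup>2
           = real n * ((H\<^sup>2 - 1) * (tan (\<phi> t))\<^sup>2)
             + real n * (real n - 1) * (\<mu> / tan (\<phi> t) ^ (n - 1))\<^sup>2"
proof -
  have "tan (\<phi> t) ^ (2 * n) = (tan (\<phi> t) ^ (n - 1) * tan (\<phi> t))\<^sup>2"
    using power_minus_mult[of n "tan (\<phi> t)"] \<open>n \<ge> 1\<close> by (simp add: power_even_eq)
  then show ?thesis
    using assms by (simp add: stab_potential_def field_simps)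
qed

lemma stab_potential_mult_tan_square_le:
  fixes n :: nat and H \<mu> :: real
  assumes "n \<ge> 1" and "H > 1" and "\<mu> > 0" and profile: "delaunay_profile n H \<mu> \<phi>"
  shows "stab_potential n H \<mu> \<phi> t * (tan (\<phi> t))\<^sup>2
           \<le> real n + real n * (real n - 1) * (H\<^sup>2 / (H\<^sup>2 - 1))"
proof -
  define x where "x = tan (\<phi> t)"
  define a where "a = \<mu> / x ^ (n - 1)"
  define sec where "sec = 1 / cos (\<phi> t)"
  have range: "0 < \<phi> t" "\<phi> t < pi / 2"
    using profile by (auto simp: delaunay_profile_def)
  then have "x > 0" and "cos (\<phi> t) > 0"
    unfolding x_def by (auto intro!: tan_gt_zero cos_gt_zero_pi)
  then have sec_square: "sec\<^sup>2 = 1 + x\<^sup>2"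
    unfolding sec_def x_def by (simp add: tan_sec inverse_eq_divide)
  have "\<mu> = tan (\<phi> t) ^ (n - 1) / (cos (\<phi> t) * sqrt (1 + (deriv \<phi> t)\<^sup>2))
             - H * tan (\<phi> t) ^ n"
    using profile unfolding delaunay_profile_def by blast
  from first_integral_le_sec[OF \<open>n \<ge> 1\<close> range _ this] have "a + H * x \<le> sec"
    by (simp add: a_def x_def sec_def)
  moreover have "a > 0" and "H * x > 0"
    using \<open>\<mu> > 0\<close> \<open>x > 0\<close> \<open>H > 1\<close> by (simp_all add: a_def)
  ultimately have "(H * x)\<^sup>2 < sec\<^sup>2" and "a\<^sup>2 < sec\<^sup>2"
    by (simp_all add: power_strict_mono)
  then have Hx: "(H\<^sup>2 - 1) * x\<^sup>2 < 1" and "a\<^sup>2 < 1 + x\<^sup>2"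
    by (simp_all add: sec_square algebra_simps)
  moreover have "1 + x\<^sup>2 < H\<^sup>2 / (H\<^sup>2 - 1)"
    using Hx \<open>H > 1\<close> by (simp add: field_simps)
  ultimately have "a\<^sup>2 < H\<^sup>2 / (H\<^sup>2 - 1)"
    by linarith
  then have "real n * ((H\<^sup>2 - 1) * x\<^sup>2) + real n * (real n - 1) * a\<^sup>2
               \<le> real n * 1 + real n * (real n - 1) * (H\<^sup>2 / (H\<^sup>2 - 1))"
    using Hx \<open>n \<ge> 1\<close> by (intro add_mono mult_left_mono) auto
  then show ?thesis
    using stab_potential_mult_tan_square[OF \<open>n \<ge> 1\<close>] \<open>x > 0\<close>
    by (simp add: a_def x_def)
qed

theorem lemma3p4:
  fixes n :: nat and H :: real
  assumes "n \<ge> 2" and "H > 1"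
  shows "\<exists>c::real. \<forall>\<mu>::real. \<forall>\<phi>::real \<Rightarrow> real.
           \<mu> > 0 \<longrightarrow> delaunay_profile n H \<mu> \<phi> \<longrightarrow>
           (\<forall>t. stab_potential n H \<mu> \<phi> t * (tan (\<phi> t))\<^sup>2 \<le> c)"
proof (intro exI allI impI)
  fix \<mu> :: real and \<phi> :: "real \<Rightarrow> real" and t :: real
  assume "\<mu> > 0" and "delaunay_profile n H \<mu> \<phi>"
  with assms show "stab_potential n H \<mu> \<phi> t * (tan (\<phi> t))\<^sup>2
                     \<le> real n + real n * (real n - 1) * (H\<^sup>2 / (H\<^sup>2 - 1))"
    by (intro stab_potential_mult_tan_square_le) auto
qed

end
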